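(* Let $\lambda=(\lambda_i)\in\{0,\dots,l-1\}^n$ and $v\in V^0_\varepsilon(\lambda)$. (a) $E_iv=0$ for all $i\in I$ if and only if $v\in\mathbb Cv(0)$. (b) $F_iv=0$ for all $i\in I$ if and only if $v\in\mathbb Cv(m^\lambda)$, where $m^\lambda=(m^\lambda_{ij})_{1\le i\le j\le n}\in\{0,\dots,l-1\}^N$ is defined by $m^\lambda_{ij}\equiv\sum_{k=1}^i\lambda_{j-k+1}\pmod l$.
   Context: $n\ge1$, $I=\{1,\dots,n\}$, $N=n(n+1)/2$; $l>2$ odd, $\gcd(l,n+1)=1$, $\varepsilon$ a primitive $l$-th root of unity; $[c]_\varepsilon=(\varepsilon^c-\varepsilon^{-c})/(\varepsilon-\varepsilon^{-1})$ for $c\in\mathbb Z$. $U_\varepsilon$: the $\mathbb C$-algebra generated by $E_i,F_i,K_\mu$ ($i\in I$, $\mu$ in the root lattice of $\mathfrak{sl}_{n+1}$) with the relations of $U_q(\mathfrak{sl}_{n+1})$ at $q=\varepsilon$. $V^0_\varepsilon(\lambda)$: vector space with basis $v(m)$, $m=(m_{ij})_{1\le i\le j\le n}\in\{0,\dots,l-1\}^N$, with $v(m+lm')=v(m)$ ($m'\in\mathbb Z^N$); $\epsilon_{ij}$ unit vectors; $\alpha_{i,j}=\sum_{k=j+1}^i\epsilon_{k-1,n-i+k}-\sum_{k=j}^i\epsilon_{k,n-i+k}$ ($j\le i$); for $c\in\mathbb Z^N$ ($c_{ij}=0$ outside range) $M_{i,j}(c)=\sum_{k=i-1}^{j-1}(c_{i,k}-c_{i-1,k})+\sum_{k=i}^j(c_{i,k}-c_{i+1,k})$,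 $N_{i,j}(c)=c_{j-1,n-i+j}-c_{j,n-i+j}$, $\mu_i(c)=\sum_{k=i-1}^nc_{i-1,k}-2\sum_{k=i}^nc_{i,k}+\sum_{k=i+1}^nc_{i+1,k}$. It is the $U_\varepsilon$-module (Schnizer module with all $a_{ij}=1$, $b_{ij}=0$) with $E_iv(m)=\sum_{j=1}^i[N_{i,j}(m)]_\varepsilon v(m+\alpha_{i,j})$, $F_iv(m)=\sum_{j=i}^n[M_{i,j}(m)-\lambda_i]_\varepsilon v(m+\epsilon_{i,j})$, $K_{\alpha_i}v(m)=\varepsilon^{\mu_i(m)+\lambda_i}v(m)$. *)

theory Defs
  imports Complex_Main
begin

text \<open>Basis labels of the Schnizer module: functions m :: nat \<times> nat \<Rightarrow> int,
  where only the entries (i,j) with 1 \<le> i \<le> j \<le> n are meaningful; all other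
  entries are 0 (the convention c_ij = 0 outside range).\<close>

type_synonym label = "nat \<times> nat \<Rightarrow> int"

definition in_range :: "nat \<Rightarrow> nat \<Rightarrow> nat \<Rightarrow> bool" where
  "in_range n i j \<longleftrightarrow> 1 \<le> i \<and> i \<le> j \<and> j \<le> n"

definition Idx :: "nat \<Rightarrow> nat \<Rightarrow> label set" where
  "Idx n l = {m. \<forall>i j. (in_range n i j \<longrightarrow> 0 \<le> m (i,j) \<and> m (i,j) < int l)
                      \<and> (\<not> in_range n i j \<longrightarrow> m (i,j) = 0)}"

text \<open>Reduction mod l (implements v(m + l m') = v(m)).\<close>
definition red :: "nat \<Rightarrow> nat \<Rightarrow> label \<Rightarrow> label" where
  "red n l m = (\<lambda>(i,j). if in_range n i j then m (i,j) mod int l else 0)"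

definition unitv :: "nat \<Rightarrow> nat \<Rightarrow> label" where
  "unitv i j = (\<lambda>p. if p = (i,j) then 1 else 0)"

definition alpha :: "nat \<Rightarrow> nat \<Rightarrow> nat \<Rightarrow> label" where
  "alpha n i j = (\<lambda>p. (\<Sum>k\<in>{j+1..i}. unitv (k-1) (n-i+k) p) - (\<Sum>k\<in>{j..i}. unitv k (n-i+k) p))"

definition Mcoef :: "nat \<Rightarrow> label \<Rightarrow> nat \<Rightarrow> nat \<Rightarrow> int" where
  "Mcoef n c i j = (\<Sum>k\<in>{i-1..j-1}. c (i,k) - c (i-1,k)) + (\<Sum>k\<in>{i..j}. c (i,k) - c (i+1,k))"

definition Ncoef :: "nat \<Rightarrow> label \<Rightarrow> nat \<Rightarrow> nat \<Rightarrow> int" where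
  "Ncoef n c i j = c (j-1, n-i+j) - c (j, n-i+j)"

definition qint :: "complex \<Rightarrow> int \<Rightarrow> complex" where
  "qint \<epsilon> c = (\<epsilon> powi c - \<epsilon> powi (-c)) / (\<epsilon> - inverse \<epsilon>)"

definition primitive_root :: "nat \<Rightarrow> complex \<Rightarrow> bool" where
  "primitive_root l \<epsilon> \<longleftrightarrow> \<epsilon> ^ l = 1 \<and> (\<forall>k. 0 < k \<and> k < l \<longrightarrow> \<epsilon> ^ k \<noteq> 1)"

text \<open>Vectors of V^0_\<epsilon>(\<lambda>): coefficient functions supported on Idx n l;
  the vector v(m) is the indicator of red m.\<close>
definition Vspace :: "nat \<Rightarrow> nat \<Rightarrow> (label \<Rightarrow> complex) set" where
  "Vspace n l = {v. \<forall>m. m \<notin> Idx n l \<longrightarrow> v m = 0}"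

definition basis :: "label \<Rightarrow> (label \<Rightarrow> complex)" where
  "basis m = (\<lambda>m'. if m' = m then 1 else 0)"

definition Eop :: "nat \<Rightarrow> nat \<Rightarrow> complex \<Rightarrow> nat \<Rightarrow> (label \<Rightarrow> complex) \<Rightarrow> (label \<Rightarrow> complex)" where
  "Eop n l \<epsilon> i v = (\<lambda>m'. \<Sum>m\<in>Idx n l. \<Sum>j\<in>{1..i}.
      if red n l (\<lambda>p. m p + alpha n i j p) = m' then v m * qint \<epsilon> (Ncoef n m i j) else 0)"

definition Fop :: "nat \<Rightarrow> nat \<Rightarrow> complex \<Rightarrow> (nat \<Rightarrow> nat) \<Rightarrow> nat \<Rightarrow> (label \<Rightarrow> complex) \<Rightarrow> (label \<Rightarrow> complex)" where
  "Fop n l \<epsilon> lam i v = (\<lambda>m'. \<Sum>m\<in>Idx n l. \<Sum>j\<in>{i..n}.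
      if red n l (\<lambda>p. m p + unitv i j p) = m' then v m * qint \<epsilon> (Mcoef n m i j - int (lam i)) else 0)"

definition mlam :: "nat \<Rightarrow> nat \<Rightarrow> (nat \<Rightarrow> nat) \<Rightarrow> label" where
  "mlam n l lam = (\<lambda>(i,j). if in_range n i j
      then (\<Sum>k\<in>{1..i}. int (lam (j-k+1))) mod int l else 0)"

end

theory Submission
  imports Defs
begin

(* At a primitive l-th root of unity with l odd, the q-integer [c] vanishes exactly when l divides c.
   This lets a single nonzero term of E_i v or F_i v be isolated.

   For (a): if the entries (a-1,b) and (a,b+1) vanish on the whole support of v, then the coefficient
   of E_(n-b+a) v at m + alpha_(n-b+a,a) is the single term [-m_ab] v(m), so m_ab = 0 on the support.
   Induction on a + (n - b) then shows that the support of v is {0}.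

   For (b): if M_(i+1,b)(m) = lambda_(i+1) (mod l) on the whole support of v, then the coefficient of
   F_i v at m + e_ij is the single term [M_ij(m) - lambda_i] v(m). By descending induction on i,
   M_ij(m) = lambda_i (mod l) for every m in the support and all i <= j. The forms M_ij are
   unitriangular, so these congruences determine m modulo l. The label m^lambda satisfies them
   because M_ij(sum_k lambda_(j-k+1)) = lambda_i holds exactly. *)

lemma sum_sum_if_eq_single:
  fixes g :: "'a \<Rightarrow> 'b \<Rightarrow> 'c::comm_monoid_add"
  assumes "finite A" "finite B" "x \<in> A" "y \<in> B"
    and "\<And>a b. a \<in> A \<Longrightarrow> b \<in> B \<Longrightarrow> f a b = f x y \<Longrightarrow> g a b \<noteq> 0 \<Longrightarrow> a = x \<and> b = y"
  shows "(\<Sum>a\<in>A. \<Sum>b\<in>B. if f a b = f x y then g a b else 0) = g x y"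
proof -
  have "(\<Sum>a\<in>A. \<Sum>b\<in>B. if f a b = f x y then g a b else 0)
      = (\<Sum>(a,b)\<in>A \<times> B. if f a b = f x y then g a b else 0)"
    by (rule sum.cartesian_product)
  also have "\<dots> = (\<Sum>(a,b)\<in>{(x,y)}. if f a b = f x y then g a b else 0)"
    using assms by (intro sum.mono_neutral_right) (auto split: if_splits)
  finally show ?thesis by simp
qed

section \<open>q-integers at a primitive root of unity\<close>

lemma primitive_root_nonzero: "primitive_root l e \<Longrightarrow> 0 < l \<Longrightarrow> e \<noteq> 0"
  by (auto simp: primitive_root_def power_0_left)

lemma primitive_root_powi_eq_1_iff:
  assumes prim: "primitive_root l e" and "0 < l"
  shows "e powi c = 1 \<longleftrightarrow> int l dvd c"
proof -
  have e0: "e \<noteq> 0" using assms by (rule primitive_root_nonzero)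
  define r where "r = nat (c mod int l)"
  have r: "r < l" "int r = c mod int l" using \<open>0 < l\<close> by (auto simp: r_def nat_less_iff)
  have "e powi c = e powi (int l * (c div int l) + int r)" by (simp add: r)
  also have "\<dots> = (e ^ l) powi (c div int l) * e ^ r"
    using e0 by (simp add: power_int_add power_int_mult)
  also have "\<dots> = e ^ r" using prim by (simp add: primitive_root_def)
  finally have "e powi c = e ^ r" .
  moreover have "e ^ r = 1 \<longleftrightarrow> r = 0" using prim r(1) by (auto simp: primitive_root_def)
  moreover have "r = 0 \<longleftrightarrow> int l dvd c" using r(2) by (auto simp: dvd_eq_mod_eq_0)
  ultimately show ?thesis by simp
qed

lemma qint_eq_0_iff:
  assumes prim: "primitive_root l e" and "odd l" "2 < l"
  shows "qint e c = 0 \<longleftrightarrow> int l dvd c"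
proof -
  have e0: "e \<noteq> 0" using assms by (simp add: primitive_root_nonzero)
  have "e ^ 2 \<noteq> 1" using prim \<open>2 < l\<close> by (simp add: primitive_root_def)
  then have "e - inverse e \<noteq> 0" using e0 by (auto simp: power2_eq_square field_simps)
  then have "qint e c = 0 \<longleftrightarrow> e powi c = e powi (- c)" by (simp add: qint_def)
  also have "\<dots> \<longleftrightarrow> e powi c * e powi c = 1"
    using e0 by (auto simp: power_int_minus field_simps)
  also have "e powi c * e powi c = e powi (2 * c)"
    using e0 by (metis mult_2 power_int_add)
  also have "\<dots> = 1 \<longleftrightarrow> int l dvd 2 * c"
    using prim \<open>2 < l\<close> by (simp add: primitive_root_powi_eq_1_iff)
  also have "\<dots> \<longleftrightarrow> int l dvd c"
    using \<open>odd l\<close> by (simp add: coprime_dvd_mult_right_iff)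
  finally show ?thesis .
qed

lemma finite_Idx: "finite (Idx n l)"
proof -
  let ?A = "{p. in_range n (fst p) (snd p)}"
  have "finite ?A"
    by (rule finite_subset[of _ "{1..n} \<times> {1..n}"]) (auto simp: in_range_def)
  moreover have "Idx n l = {f. \<forall>p. (p \<in> ?A \<longrightarrow> f p \<in> {0..<int l}) \<and> (p \<notin> ?A \<longrightarrow> f p = 0)}"
    unfolding Idx_def by (auto simp: split_paired_all)
  ultimately show ?thesis using finite_set_of_finite_funs[of ?A "{0..<int l}" 0] by simp
qed

lemma Idx_outside: "m \<in> Idx n l \<Longrightarrow> \<not> in_range n i j \<Longrightarrow> m (i,j) = 0"
  by (simp add: Idx_def)

lemma red_in_Idx: "0 < l \<Longrightarrow> red n l f \<in> Idx n l"
  by (simp add: Idx_def red_def)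

lemma red_eq_iff:
  "red n l f = red n l g \<longleftrightarrow> (\<forall>i j. in_range n i j \<longrightarrow> int l dvd f (i,j) - g (i,j))"
  by (auto simp: red_def fun_eq_iff mod_eq_dvd_iff)

lemma dvd_red_diff:
  assumes "\<And>i j. \<not> in_range n i j \<Longrightarrow> f (i,j) = 0"
  shows "int l dvd red n l f p - f p"
  using assms by (cases p) (auto simp: red_def mod_eq_dvd_iff[symmetric])

lemma Idx_eqI:
  assumes "m \<in> Idx n l" "m' \<in> Idx n l"
    and "\<And>i j. in_range n i j \<Longrightarrow> int l dvd m (i,j) - m' (i,j)"
  shows "m = m'"
proof
  fix p :: "nat \<times> nat"
  obtain i j where p: "p = (i,j)" by force
  show "m p = m' p"
  proof (cases "in_range n i j")
    case True
    then have "m (i,j) mod int l = m' (i,j) mod int l"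
      using assms(3) by (simp add: mod_eq_dvd_iff)
    then show ?thesis using assms(1,2) True by (simp add: Idx_def p)
  next
    case False
    then show ?thesis using assms(1,2) by (simp add: Idx_outside p)
  qed
qed

lemma Vspace_support: "v \<in> Vspace n l \<Longrightarrow> v m \<noteq> 0 \<Longrightarrow> m \<in> Idx n l"
  by (auto simp: Vspace_def)

lemma Idx_entry_eq_0_if_dvd:
  assumes "m \<in> Idx n l" "int l dvd m (i,j)"
  shows "m (i,j) = 0"
proof (cases "in_range n i j")
  case True
  then have "m (i,j) mod int l = m (i,j)" using assms(1) by (simp add: Idx_def)
  then show ?thesis using assms(2) by (simp add: dvd_eq_mod_eq_0)
next
  case False
  with assms(1) show ?thesis by (rule Idx_outside)
qed

section \<open>The linear forms M_ij\<close>

lemma Mcoef_add: "Mcoef n (\<lambda>p. x p + y p) i j = Mcoef n x i j + Mcoef n y i j"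
  by (simp only: Mcoef_def add_diff_add sum.distrib)

lemma Mcoef_diff: "Mcoef n (\<lambda>p. x p - y p) i j = Mcoef n x i j - Mcoef n y i j"
  using Mcoef_add[of n "\<lambda>p. x p - y p" y i j] by simp

lemma dvd_Mcoef_diff:
  assumes "\<And>p. k dvd x p - y p"
  shows "k dvd Mcoef n x i j - Mcoef n y i j"
proof -
  have "k dvd Mcoef n (\<lambda>p. x p - y p) i j"
    unfolding Mcoef_def by (intro dvd_add dvd_sum; rule dvd_diff; rule assms)
  then show ?thesis by (simp only: Mcoef_diff)
qed

lemma Mcoef_diag:
  assumes "\<And>a b. \<not> in_range n a b \<Longrightarrow> d (a,b) = 0" "1 \<le> i"
  shows "Mcoef n d i i = d (i,i) - d (i-1,i-1)"
proof -
  have "d (i, i-1) = 0" "d (i+1, i) = 0" using assms by (auto simp: in_range_def)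
  then show ?thesis using assms(2) by (simp add: Mcoef_def)
qed

lemma Mcoef_Suc:
  assumes "1 \<le> i" "i \<le> j"
  shows "Mcoef n d i (Suc j) = Mcoef n d i j + d (i,j) - d (i-1,j) + d (i,Suc j) - d (Suc i,Suc j)"
proof -
  obtain j0 where "j = Suc j0" using assms by (cases j) auto
  moreover have "{i-1..j} = insert j {i-1..j-1}" "{i..Suc j} = insert (Suc j) {i..j}" using assms by auto
  ultimately show ?thesis using assms by (simp add: Mcoef_def)
qed

lemma Mcoef_unitv:
  assumes "i \<le> j" "i < b"
  shows "Mcoef n (unitv i j) (Suc i) b = (if j < b then -1 else 0)"
proof -
  have "(\<Sum>k\<in>{i..b-1}. unitv i j (Suc i, k) - unitv i j (i, k)) = (\<Sum>k\<in>{i..b-1}. if k = j then -1 else 0)"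
    by (rule sum.cong) (auto simp: unitv_def)
  moreover have "(\<Sum>k\<in>{Suc i..b}. unitv i j (Suc i, k) - unitv i j (Suc (Suc i), k)) = 0"
    by (rule sum.neutral) (auto simp: unitv_def)
  ultimately show ?thesis using assms by (auto simp: Mcoef_def)
qed

(* M_bb determines entry (b,b) from (b-1,b-1), and M_ab - M_a(b-1) determines entry (a,b), a < b,
   from (a,b-1), (a-1,b-1) and (a+1,b); all of these have a smaller value of 2b - a. *)
lemma dvd_entries_if_dvd_Mcoef:
  assumes outside: "\<And>a b. \<not> in_range n a b \<Longrightarrow> d (a,b) = 0"
    and M: "\<And>i j. in_range n i j \<Longrightarrow> k dvd Mcoef n d i j"
  shows "k dvd d (a,b)"
proof (induction "2 * b - a" arbitrary: a b rule: less_induct)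
  case less
  consider "\<not> in_range n a b" | "in_range n a b" "a = b" | "in_range n a b" "a < b"
    by (metis in_range_def order_le_less)
  then show ?case
  proof cases
    case 1
    then show ?thesis by (simp add: outside)
  next
    case 2
    then have "d (a,b) = Mcoef n d a a + d (a-1, a-1)" "1 \<le> a"
      using Mcoef_diag[of n d a, OF outside] by (auto simp: in_range_def)
    moreover have "k dvd Mcoef n d a a" using 2 M by simp
    moreover have "k dvd d (a-1, a-1)" using 2 \<open>1 \<le> a\<close> by (intro less) auto
    ultimately show ?thesis by simp
  next
    case 3
    then have r: "1 \<le> a" "a \<le> b - 1" "b \<le> n" by (auto simp: in_range_def)
    have "d (a,b) = Mcoef n d a b - Mcoef n d a (b-1) - d (a,b-1) + d (a-1,b-1) + d (Suc a,b)"
      using Mcoef_Suc[OF r(1,2), of n d] 3 by simp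
    moreover have "k dvd Mcoef n d a b" "k dvd Mcoef n d a (b-1)"
      using M r by (auto simp: in_range_def)
    moreover have "k dvd d (a,b-1)" "k dvd d (a-1,b-1)" "k dvd d (Suc a,b)"
      using r 3 by (auto intro: less)
    ultimately show ?thesis by simp
  qed
qed

definition mlam_lift :: "nat \<Rightarrow> (nat \<Rightarrow> nat) \<Rightarrow> label" where
  "mlam_lift n lam = (\<lambda>(i,j). if in_range n i j then \<Sum>k\<in>{1..i}. int (lam (j-k+1)) else 0)"

lemma red_mlam_lift: "red n l (mlam_lift n lam) = mlam n l lam"
  by (auto simp: red_def mlam_lift_def mlam_def fun_eq_iff)

lemma mlam_lift_apply:
  "i \<le> j \<Longrightarrow> j \<le> n \<Longrightarrow> mlam_lift n lam (i,j) = (\<Sum>k\<in>{1..i}. int (lam (j-k+1)))"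
  by (cases i) (auto simp: mlam_lift_def in_range_def)

lemma mlam_lift_Suc_Suc:
  assumes "i \<le> j" "Suc j \<le> n"
  shows "mlam_lift n lam (Suc i, Suc j) = int (lam (Suc j)) + mlam_lift n lam (i, j)"
proof -
  have "mlam_lift n lam (Suc i, Suc j) = (\<Sum>k\<in>{1..Suc i}. int (lam (Suc j-k+1)))"
    using assms by (intro mlam_lift_apply) auto
  also have "\<dots> = int (lam (Suc j)) + (\<Sum>k\<in>{1..i}. int (lam (j-k+1)))"
    by (subst sum.atLeast_Suc_atMost) (simp_all add: sum.shift_bounds_cl_Suc_ivl del: sum.cl_ivl_Suc)
  also have "(\<Sum>k\<in>{1..i}. int (lam (j-k+1))) = mlam_lift n lam (i, j)"
    using assms by (intro mlam_lift_apply[symmetric]) auto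
  finally show ?thesis .
qed

lemma Mcoef_mlam_lift:
  assumes "1 \<le> i" "i \<le> j" "j \<le> n"
  shows "Mcoef n (mlam_lift n lam) i j = int (lam i)"
  using assms(2,3)
proof (induction j rule: dec_induct)
  case base
  obtain i0 where "i = Suc i0" using assms(1) by (cases i) auto
  then show ?case
    using Mcoef_diag[of n "mlam_lift n lam" i] assms(1) base
    by (simp add: mlam_lift_Suc_Suc) (simp add: mlam_lift_def)
next
  case (step j)
  obtain i0 where "i = Suc i0" using assms(1) by (cases i) auto
  then show ?case
    using Mcoef_Suc[OF assms(1) step(1), of n "mlam_lift n lam"] step
    by (simp add: mlam_lift_Suc_Suc)
qed

lemma Mcoef_mlam:
  assumes "1 \<le> i" "i \<le> j" "j \<le> n"
  shows "int l dvd Mcoef n (mlam n l lam) i j - int (lam i)"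
proof -
  have "int l dvd Mcoef n (red n l (mlam_lift n lam)) i j - Mcoef n (mlam_lift n lam) i j"
    by (intro dvd_Mcoef_diff dvd_red_diff) (simp add: mlam_lift_def)
  then show ?thesis using Mcoef_mlam_lift[OF assms] by (simp add: red_mlam_lift)
qed

lemma eq_mlam_if_dvd_Mcoef:
  assumes m: "m \<in> Idx n l" and "0 < l"
    and M: "\<And>i j. in_range n i j \<Longrightarrow> int l dvd Mcoef n m i j - int (lam i)"
  shows "m = mlam n l lam"
proof (rule Idx_eqI[OF m])
  show "mlam n l lam \<in> Idx n l"
    using red_in_Idx[OF \<open>0 < l\<close>] by (simp add: red_mlam_lift[symmetric])
  fix i j
  have "int l dvd (\<lambda>p. m p - mlam n l lam p) (i,j)"
  proof (rule dvd_entries_if_dvd_Mcoef)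
    show "m (a,b) - mlam n l lam (a,b) = 0" if "\<not> in_range n a b" for a b
      using that m by (simp add: Idx_outside mlam_def)
    show "int l dvd Mcoef n (\<lambda>p. m p - mlam n l lam p) a b" if "in_range n a b" for a b
    proof -
      have "1 \<le> a" "a \<le> b" "b \<le> n" using that by (auto simp: in_range_def)
      then have "int l dvd (Mcoef n m a b - int (lam a)) - (Mcoef n (mlam n l lam) a b - int (lam a))"
        by (intro dvd_diff M[OF that] Mcoef_mlam)
      then show ?thesis by (simp add: Mcoef_diff)
    qed
  qed
  then show "int l dvd m (i,j) - mlam n l lam (i,j)" by simp
qed

section \<open>Vectors annihilated by all E_i\<close>

(* alpha_(i,j) is supported on the diagonals q - p = n-i and q - p = n-i+1 of entries (p,q); for
   i = n-b+a these contain (a,b), (a-1,b) and (a,b+1). *)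
lemma alpha_apply_up:
  assumes "2 \<le> a" "a \<le> b" "b \<le> n" "1 \<le> j"
  shows "alpha n (n-b+a) j (a-1,b) = (if j < a then 1 else 0)"
proof -
  have "(\<Sum>k\<in>{j+1..n-b+a}. unitv (k-1) (n-(n-b+a)+k) (a-1,b)) = (\<Sum>k\<in>{j+1..n-b+a}. if k = a then 1 else 0)"
    by (rule sum.cong) (use assms in \<open>auto simp: unitv_def\<close>)
  moreover have "(\<Sum>k\<in>{j..n-b+a}. unitv k (n-(n-b+a)+k) (a-1,b)) = 0"
    by (rule sum.neutral) (use assms in \<open>auto simp: unitv_def\<close>)
  moreover have "a \<le> n - b + a" by simp
  ultimately show ?thesis using assms by (simp add: alpha_def)
qed

lemma alpha_apply_right:
  assumes "1 \<le> a" "a \<le> b" "b \<le> n" "1 \<le> j"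
  shows "alpha n (n-b+a) j (a, Suc b) = (if j \<le> a \<and> b < n then 1 else 0)"
proof -
  have "(\<Sum>k\<in>{j+1..n-b+a}. unitv (k-1) (n-(n-b+a)+k) (a, Suc b)) = (\<Sum>k\<in>{j+1..n-b+a}. if k = Suc a then 1 else 0)"
    by (rule sum.cong) (use assms in \<open>auto simp: unitv_def\<close>)
  moreover have "(\<Sum>k\<in>{j..n-b+a}. unitv k (n-(n-b+a)+k) (a, Suc b)) = 0"
    by (rule sum.neutral) (use assms in \<open>auto simp: unitv_def\<close>)
  ultimately show ?thesis using assms by (auto simp: alpha_def)
qed

(* A competing term j < a (resp. j > a) of E_(n-b+a) would differ by one at entry (a-1,b)
   (resp. (a,b+1)). *)
lemma alpha_shift_unique:
  assumes m: "m \<in> Idx n l" and m': "m' \<in> Idx n l" and "1 < l"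
    and r: "1 \<le> a" "a \<le> b" "b \<le> n" and j: "j \<in> {1..n-b+a}"
    and up: "m' (a-1,b) = m (a-1,b)" and right: "m' (a,Suc b) = m (a,Suc b)"
    and eq: "red n l (\<lambda>p. m' p + alpha n (n-b+a) j p) = red n l (\<lambda>p. m p + alpha n (n-b+a) a p)"
  shows "m' = m \<and> j = a"
proof -
  let ?i = "n-b+a"
  have dvd: "int l dvd (m' (x,y) + alpha n ?i j (x,y)) - (m (x,y) + alpha n ?i a (x,y))"
    if "in_range n x y" for x y
    using eq that by (simp add: red_eq_iff)
  have "j = a"
  proof (rule ccontr)
    assume "j \<noteq> a"
    then consider "j < a" | "a < j" by linarith
    then have "int l dvd 1"
    proof cases
      case 1
      then have "2 \<le> a" "in_range n (a-1) b" using j r by (auto simp: in_range_def)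
      then show ?thesis using dvd[of "a-1" b] alpha_apply_up[of a b n] 1 j r up by simp
    next
      case 2
      then have "b < n" "in_range n a (Suc b)" using j r by (auto simp: in_range_def)
      then have "int l dvd - 1"
        using dvd[of a "Suc b"] alpha_apply_right[of a b n] 2 j r right by simp
      then show ?thesis by (simp only: dvd_minus_iff)
    qed
    then show False using \<open>1 < l\<close> by simp
  qed
  moreover have "m' = m" using dvd \<open>j = a\<close> by (intro Idx_eqI[OF m' m]) simp
  ultimately show ?thesis by simp
qed

lemma Eop_apply_isolated:
  assumes "m \<in> Idx n l" "j \<in> {1..i}"
    and "\<And>m' j'. m' \<in> Idx n l \<Longrightarrow> j' \<in> {1..i} \<Longrightarrow> v m' \<noteq> 0 \<Longrightarrow>
      red n l (\<lambda>p. m' p + alpha n i j' p) = red n l (\<lambda>p. m p + alpha n i j p) \<Longrightarrow> m' = m \<and> j' = j"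
  shows "Eop n l e i v (red n l (\<lambda>p. m p + alpha n i j p)) = v m * qint e (Ncoef n m i j)"
  unfolding Eop_def using assms
  by (intro sum_sum_if_eq_single[where f = "\<lambda>m' j'. red n l (\<lambda>p. m' p + alpha n i j' p)"] finite_Idx)
    auto

lemma entry_eq_0_if_Eop_annihilates:
  assumes prim: "primitive_root l e" and "odd l" "2 < l" and V: "v \<in> Vspace n l"
    and E: "Eop n l e (n-b+a) v = (\<lambda>_. 0)"
    and r: "1 \<le> a" "a \<le> b" "b \<le> n"
    and zero: "\<And>m'. v m' \<noteq> 0 \<Longrightarrow> m' (a-1,b) = 0 \<and> m' (a,Suc b) = 0"
    and vm: "v m \<noteq> 0"
  shows "m (a,b) = 0"
proof -
  have m: "m \<in> Idx n l" using V vm by (rule Vspace_support)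
  have "Eop n l e (n-b+a) v (red n l (\<lambda>p. m p + alpha n (n-b+a) a p))
      = v m * qint e (Ncoef n m (n-b+a) a)"
  proof (rule Eop_apply_isolated[OF m])
    show "a \<in> {1..n-b+a}" using r by simp
    show "m' = m \<and> j' = a"
      if "m' \<in> Idx n l" "j' \<in> {1..n-b+a}" "v m' \<noteq> 0"
        and "red n l (\<lambda>p. m' p + alpha n (n-b+a) j' p) = red n l (\<lambda>p. m p + alpha n (n-b+a) a p)"
      for m' j'
      using that zero[OF vm] zero[OF \<open>v m' \<noteq> 0\<close>] \<open>2 < l\<close>
      by (intro alpha_shift_unique[OF m _ _ r]) auto
  qed
  moreover have "Ncoef n m (n-b+a) a = - m (a,b)"
    using zero[OF vm] r by (simp add: Ncoef_def)
  ultimately have "qint e (- m (a,b)) = 0" using E vm by simp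
  then have "int l dvd m (a,b)" using qint_eq_0_iff[OF prim \<open>odd l\<close> \<open>2 < l\<close>] by simp
  then show ?thesis by (rule Idx_entry_eq_0_if_dvd[OF m])
qed

lemma support_eq_0_if_Eop_annihilates:
  assumes prim: "primitive_root l e" and "odd l" "2 < l" and V: "v \<in> Vspace n l"
    and E: "\<forall>i\<in>{1..n}. Eop n l e i v = (\<lambda>_. 0)"
    and vm: "v m \<noteq> 0"
  shows "m = (\<lambda>_. 0)"
proof -
  have "\<forall>m. v m \<noteq> 0 \<longrightarrow> m (a,b) = 0" for a b
  proof (induction "a + (n - b)" arbitrary: a b rule: less_induct)
    case less
    show ?case
    proof (cases "in_range n a b")
      case False
      then show ?thesis using V by (auto dest: Vspace_support Idx_outside)
    next
      case True
      then have r: "1 \<le> a" "a \<le> b" "b \<le> n" by (auto simp: in_range_def)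
      have up: "m' (a-1,b) = 0" if "v m' \<noteq> 0" for m'
        using less[of "a-1" b] r that by simp
      have right: "m' (a,Suc b) = 0" if "v m' \<noteq> 0" for m'
      proof (cases "b < n")
        case True
        then show ?thesis using less[of a "Suc b"] that by simp
      next
        case False
        then show ?thesis using Vspace_support[OF V that] by (simp add: Idx_outside in_range_def)
      qed
      have "n-b+a \<in> {1..n}" using r by auto
      then have "Eop n l e (n-b+a) v = (\<lambda>_. 0)" using E by blast
      then show ?thesis
        using entry_eq_0_if_Eop_annihilates[OF prim \<open>odd l\<close> \<open>2 < l\<close> V _ r] up right by blast
    qed
  qed
  then show ?thesis using vm by (auto simp: fun_eq_iff)
qed

lemma Eop_annihilates_basis_0: "Eop n l e i (\<lambda>m. c * basis (\<lambda>_. 0) m) = (\<lambda>_. 0)"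
  unfolding Eop_def by (intro ext sum.neutral ballI) (simp add: basis_def Ncoef_def qint_def)

section \<open>Vectors annihilated by all F_i\<close>

(* Two terms j <> j' of F_i differ by one in M_(i+1,max j j'). *)
lemma unitv_shift_unique:
  assumes m: "m \<in> Idx n l" and m': "m' \<in> Idx n l" and "1 < l"
    and "1 \<le> i" and j: "j \<in> {i..n}" and j': "j' \<in> {i..n}"
    and next_row: "\<And>b. b \<in> {Suc i..n} \<Longrightarrow> int l dvd Mcoef n m' (Suc i) b - Mcoef n m (Suc i) b"
    and eq: "red n l (\<lambda>p. m' p + unitv i j' p) = red n l (\<lambda>p. m p + unitv i j p)"
  shows "m' = m \<and> j' = j"
proof -
  have dvd: "int l dvd (m' p + unitv i j' p) - (m p + unitv i j p)" for p
  proof (cases p)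
    case (Pair x y)
    show ?thesis
    proof (cases "in_range n x y")
      case True
      then show ?thesis using eq by (simp add: red_eq_iff Pair)
    next
      case False
      then have "(x,y) \<noteq> (i,j)" "(x,y) \<noteq> (i,j')" using \<open>1 \<le> i\<close> j j' by (auto simp: in_range_def)
      then show ?thesis using False m m' by (auto simp: Pair Idx_outside unitv_def)
    qed
  qed
  have "j' = j"
  proof (rule ccontr)
    assume "j' \<noteq> j"
    define b where "b = max j j'"
    have b: "b \<in> {Suc i..n}" using j j' \<open>j' \<noteq> j\<close> by (auto simp: b_def)
    have "int l dvd Mcoef n (\<lambda>p. m' p + unitv i j' p) (Suc i) b - Mcoef n (\<lambda>p. m p + unitv i j p) (Suc i) b"
      by (rule dvd_Mcoef_diff) (rule dvd)
    then have "int l dvd (Mcoef n m' (Suc i) b - Mcoef n m (Suc i) b)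
        + (Mcoef n (unitv i j') (Suc i) b - Mcoef n (unitv i j) (Suc i) b)"
      by (simp add: Mcoef_add algebra_simps)
    then have "int l dvd Mcoef n (unitv i j') (Suc i) b - Mcoef n (unitv i j) (Suc i) b"
      using next_row[OF b] by (simp add: dvd_add_right_iff)
    moreover have "Mcoef n (unitv i j') (Suc i) b - Mcoef n (unitv i j) (Suc i) b \<in> {-1, 1}"
      using j j' b \<open>j' \<noteq> j\<close> by (auto simp: Mcoef_unitv b_def)
    ultimately show False using \<open>1 < l\<close> by auto
  qed
  moreover have "m' = m" using dvd \<open>j' = j\<close> by (intro Idx_eqI[OF m' m]) simp
  ultimately show ?thesis by simp
qed

lemma Fop_apply_isolated:
  assumes "m \<in> Idx n l" "j \<in> {i..n}"
    and "\<And>m' j'. m' \<in> Idx n l \<Longrightarrow> j' \<in> {i..n} \<Longrightarrow> v m' \<noteq> 0 \<Longrightarrow>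
      red n l (\<lambda>p. m' p + unitv i j' p) = red n l (\<lambda>p. m p + unitv i j p) \<Longrightarrow> m' = m \<and> j' = j"
  shows "Fop n l e lam i v (red n l (\<lambda>p. m p + unitv i j p)) = v m * qint e (Mcoef n m i j - int (lam i))"
  unfolding Fop_def using assms
  by (intro sum_sum_if_eq_single[where f = "\<lambda>m' j'. red n l (\<lambda>p. m' p + unitv i j' p)"] finite_Idx)
    auto

lemma dvd_Mcoef_row_if_Fop_annihilates:
  assumes prim: "primitive_root l e" and "odd l" "2 < l" and V: "v \<in> Vspace n l"
    and F: "Fop n l e lam i v = (\<lambda>_. 0)"
    and "1 \<le> i" "j \<in> {i..n}"
    and next_row: "\<And>m' b. v m' \<noteq> 0 \<Longrightarrow> b \<in> {Suc i..n} \<Longrightarrow>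
      int l dvd Mcoef n m' (Suc i) b - int (lam (Suc i))"
    and vm: "v m \<noteq> 0"
  shows "int l dvd Mcoef n m i j - int (lam i)"
proof -
  have m: "m \<in> Idx n l" using V vm by (rule Vspace_support)
  have "Fop n l e lam i v (red n l (\<lambda>p. m p + unitv i j p)) = v m * qint e (Mcoef n m i j - int (lam i))"
  proof (rule Fop_apply_isolated[OF m \<open>j \<in> {i..n}\<close>])
    fix m' j'
    assume "m' \<in> Idx n l" "j' \<in> {i..n}" "v m' \<noteq> 0"
      and "red n l (\<lambda>p. m' p + unitv i j' p) = red n l (\<lambda>p. m p + unitv i j p)"
    moreover have "int l dvd Mcoef n m' (Suc i) b - Mcoef n m (Suc i) b" if "b \<in> {Suc i..n}" for b
      using dvd_diff[OF next_row[OF \<open>v m' \<noteq> 0\<close> that] next_row[OF vm that]] by simp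
    ultimately show "m' = m \<and> j' = j"
      using \<open>2 < l\<close> \<open>1 \<le> i\<close> \<open>j \<in> {i..n}\<close> by (intro unitv_shift_unique[OF m]) auto
  qed
  then have "qint e (Mcoef n m i j - int (lam i)) = 0" using F vm by simp
  then show ?thesis using qint_eq_0_iff[OF prim \<open>odd l\<close> \<open>2 < l\<close>] by simp
qed

lemma dvd_Mcoef_if_Fop_annihilates:
  assumes prim: "primitive_root l e" and "odd l" "2 < l" and V: "v \<in> Vspace n l"
    and F: "\<forall>i\<in>{1..n}. Fop n l e lam i v = (\<lambda>_. 0)"
  shows "1 \<le> i \<Longrightarrow> j \<in> {i..n} \<Longrightarrow> v m \<noteq> 0 \<Longrightarrow> int l dvd Mcoef n m i j - int (lam i)"
proof (induction "n - i" arbitrary: i j m rule: less_induct)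
  case less
  have "Fop n l e lam i v = (\<lambda>_. 0)" using F less.prems by auto
  then show ?case
    using dvd_Mcoef_row_if_Fop_annihilates[OF prim \<open>odd l\<close> \<open>2 < l\<close> V] less by fastforce
qed

lemma support_eq_mlam_if_Fop_annihilates:
  assumes prim: "primitive_root l e" and "odd l" "2 < l" and V: "v \<in> Vspace n l"
    and F: "\<forall>i\<in>{1..n}. Fop n l e lam i v = (\<lambda>_. 0)"
    and vm: "v m \<noteq> 0"
  shows "m = mlam n l lam"
proof (rule eq_mlam_if_dvd_Mcoef)
  show "m \<in> Idx n l" using V vm by (rule Vspace_support)
  show "0 < l" using \<open>2 < l\<close> by simp
  show "int l dvd Mcoef n m i j - int (lam i)" if "in_range n i j" for i j
    using that vm by (intro dvd_Mcoef_if_Fop_annihilates[OF prim \<open>odd l\<close> \<open>2 < l\<close> V F])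
      (auto simp: in_range_def)
qed

lemma Fop_annihilates_basis_mlam:
  assumes "primitive_root l e" "odd l" "2 < l" "i \<in> {1..n}"
  shows "Fop n l e lam i (\<lambda>m. c * basis (mlam n l lam) m) = (\<lambda>_. 0)"
  unfolding Fop_def using assms
  by (intro ext sum.neutral ballI) (simp add: basis_def qint_eq_0_iff Mcoef_mlam)

lemma eq_scaled_basisI: "(\<And>m. v m \<noteq> 0 \<Longrightarrow> m = m0) \<Longrightarrow> v = (\<lambda>m. v m0 * basis m0 m)"
  by (rule ext) (auto simp: basis_def)

theorem proposition5p8:
  fixes n l :: nat and \<epsilon> :: complex and lam :: "nat \<Rightarrow> nat" and v :: "label \<Rightarrow> complex"
  assumes "n \<ge> 1" and "l > 2" and "odd l" and "coprime l (n+1)"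
    and "primitive_root l \<epsilon>"
    and "\<forall>i\<in>{1..n}. lam i < l"
    and "v \<in> Vspace n l"
  shows "((\<forall>i\<in>{1..n}. Eop n l \<epsilon> i v = (\<lambda>_. 0)) \<longleftrightarrow> (\<exists>c. v = (\<lambda>m. c * basis (\<lambda>_. 0) m)))
       \<and> ((\<forall>i\<in>{1..n}. Fop n l \<epsilon> lam i v = (\<lambda>_. 0)) \<longleftrightarrow> (\<exists>c. v = (\<lambda>m. c * basis (mlam n l lam) m)))"
proof (intro conjI iffI)
  assume "\<forall>i\<in>{1..n}. Eop n l \<epsilon> i v = (\<lambda>_. 0)"
  then have "v = (\<lambda>m. v (\<lambda>_. 0) * basis (\<lambda>_. 0) m)"
    by (intro eq_scaled_basisI support_eq_0_if_Eop_annihilates[OF assms(5,3,2,7)])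
  then show "\<exists>c. v = (\<lambda>m. c * basis (\<lambda>_. 0) m)" ..
next
  assume "\<exists>c. v = (\<lambda>m. c * basis (\<lambda>_. 0) m)"
  then show "\<forall>i\<in>{1..n}. Eop n l \<epsilon> i v = (\<lambda>_. 0)"
    by (auto simp: Eop_annihilates_basis_0)
next
  assume "\<forall>i\<in>{1..n}. Fop n l \<epsilon> lam i v = (\<lambda>_. 0)"
  then have "v = (\<lambda>m. v (mlam n l lam) * basis (mlam n l lam) m)"
    by (intro eq_scaled_basisI support_eq_mlam_if_Fop_annihilates[OF assms(5,3,2,7)])
  then show "\<exists>c. v = (\<lambda>m. c * basis (mlam n l lam) m)" ..
next
  assume "\<exists>c. v = (\<lambda>m. c * basis (mlam n l lam) m)"
  then show "\<forall>i\<in>{1..n}. Fop n l \<epsilon> lam i v = (\<lambda>_. 0)"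
    by (auto simp: Fop_annihilates_basis_mlam[OF assms(5,3,2)])
qed

end
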